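(* Let $\Lambda$ be a recursive $\varepsilon$-number, and let $I$, $H$, $R_n^\alpha$, $S_n^\alpha$ be as in the context. For all $x, y \in H$, $n<\omega$ and $\alpha<\Lambda$: $x S_n^\alpha y$ if and only if $x R_n^\alpha y$.
   Context: Fix a recursive ordinal $\Lambda$ that is an $\varepsilon$-number, i.e. $\omega^\Lambda = \Lambda$. The ordinal logarithm is defined by $\ell(0)=0$ and $\ell(\alpha+\omega^\beta)=\beta$. An $\ell$-sequence is a sequence of ordinals $x=\langle x_0,x_1,\dots\rangle$ indexed by $\omega$ with $x_{i+1}\le \ell(x_i)$ for all $i<\omega$. Let $I$ be the set of $\ell$-sequences all of whose entries are $<\Lambda$, and $H\subseteq I$ the set of those $x\in I$ with $x_j=0$ for some $j<\omega$. For $n<\omega$, define $x R_n y$ for $x,y\in I$ (and $x S_n y$ for $x,y\in H$, same condition) by: $x_m>y_m$ for all $m\le n$ and $x_i\ge y_i$ for all $i>n$. Define $R_n^\alpha$ on $I$ recursively: $x R_n^0 y$ iff $x=y$; $x R_n^{1+\alpha} y$ iff for every $\beta<1+\alpha$ there is $z\in I$ with $x R_n z$ and $z R_n^\beta y$. Define $S_n^\alpha$ on $H$ in the same way, with $S_n$ in place of $R_n$ and $z$ ranging over $H$. *)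

theory Defs
  imports Main
begin

text \<open>Ordinals are modelled as elements of an arbitrary well-ordered type 'o:
  an element a stands for the order type of its initial segment {x. x < a}.\<close>

definition ord_iso :: "'a set \<Rightarrow> ('a \<Rightarrow> 'a \<Rightarrow> bool) \<Rightarrow> 'b set \<Rightarrow> ('b \<Rightarrow> 'b \<Rightarrow> bool) \<Rightarrow> bool" where
  "ord_iso A lA B lB \<longleftrightarrow>
     (\<exists>h. bij_betw h A B \<and> (\<forall>x\<in>A. \<forall>y\<in>A. lA x y \<longleftrightarrow> lB (h x) (h y)))"

definition ozero :: "'o::wellorder" where
  "ozero = (LEAST x. True)"

text \<open>oadd a b c means a + b = c (ordinal addition).\<close>
definition oadd :: "'o::wellorder \<Rightarrow> 'o \<Rightarrow> 'o \<Rightarrow> bool" where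
  "oadd a b c \<longleftrightarrow> a \<le> c \<and> ord_iso {x. a \<le> x \<and> x < c} (<) {x. x < b} (<)"

text \<open>Finitely supported functions from b to omega, ordered antilexicographically;
  their order type is omega^b.\<close>
definition FinFun :: "'o::wellorder \<Rightarrow> ('o \<Rightarrow> nat) set" where
  "FinFun b = {f. (\<forall>x. \<not> x < b \<longrightarrow> f x = 0) \<and> finite {x. f x \<noteq> 0}}"

definition antilex :: "('o::wellorder \<Rightarrow> nat) \<Rightarrow> ('o \<Rightarrow> nat) \<Rightarrow> bool" where
  "antilex f g \<longleftrightarrow> (\<exists>m. f m < g m \<and> (\<forall>x. m < x \<longrightarrow> f x = g x))"

text \<open>omega_pow b c means omega^b = c.\<close>
definition omega_pow :: "'o::wellorder \<Rightarrow> 'o \<Rightarrow> bool" where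
  "omega_pow b c \<longleftrightarrow> ord_iso {x. x < c} (<) (FinFun b) antilex"

text \<open>Ordinal logarithm: l(0) = 0 and l(a + omega^b) = b.\<close>
definition ell :: "'o::wellorder \<Rightarrow> 'o" where
  "ell a = (THE b. (a = ozero \<and> b = ozero) \<or> (\<exists>g d. omega_pow b d \<and> oadd g d a))"

definition Iseq :: "'o::wellorder \<Rightarrow> (nat \<Rightarrow> 'o) set" where
  "Iseq \<Lambda> = {x. (\<forall>i. x (Suc i) \<le> ell (x i)) \<and> (\<forall>i. x i < \<Lambda>)}"

definition Hseq :: "'o::wellorder \<Rightarrow> (nat \<Rightarrow> 'o) set" where
  "Hseq \<Lambda> = {x \<in> Iseq \<Lambda>. \<exists>j. x j = ozero}"

definition Rrel :: "nat \<Rightarrow> (nat \<Rightarrow> 'o::wellorder) \<Rightarrow> (nat \<Rightarrow> 'o) \<Rightarrow> bool" where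
  "Rrel n x y \<longleftrightarrow> (\<forall>m\<le>n. x m > y m) \<and> (\<forall>i>n. x i \<ge> y i)"

text \<open>Defined inductively; this is the least fixed point,
  which coincides with the well-founded recursive definition.\<close>
inductive iter_rel :: "'a set \<Rightarrow> ('a \<Rightarrow> 'a \<Rightarrow> bool) \<Rightarrow> 'o::wellorder \<Rightarrow> 'a \<Rightarrow> 'a \<Rightarrow> bool"
  for C P where
  zero: "x \<in> C \<Longrightarrow> iter_rel C P ozero x x"
| nonzero: "x \<in> C \<Longrightarrow> y \<in> C \<Longrightarrow> a \<noteq> ozero \<Longrightarrow>
     (\<forall>b. b < a \<longrightarrow> (\<exists>z\<in>C. P x z \<and> iter_rel C P b z y)) \<Longrightarrow> iter_rel C P a x y"

end

theory Submission
  imports Defs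
begin

text \<open>Every \<open>\<ell>\<close>-sequence in \<open>H\<close> is zero from some index on, because \<open>\<ell>(0) = 0\<close>.
  Cutting an \<open>\<ell>\<close>-sequence off to zero beyond an index \<open>k > n\<close> maps \<open>I\<close> into \<open>H\<close>,
  preserves \<open>R\<^sub>n\<close>, and fixes any two given elements of \<open>H\<close> once \<open>k\<close> is large.
  Such a map transports every iterate \<open>R\<^sub>n\<^sup>\<alpha>\<close> on \<open>I\<close> to \<open>S\<^sub>n\<^sup>\<alpha>\<close> on \<open>H\<close>; the converse
  inclusion holds since \<open>H \<subseteq> I\<close>.\<close>

lemma iter_rel_map:
  assumes "iter_rel C P a x y"
    and "\<And>z. z \<in> C \<Longrightarrow> f z \<in> D"
    and "\<And>z w. z \<in> C \<Longrightarrow> w \<in> C \<Longrightarrow> P z w \<Longrightarrow> Q (f z) (f w)"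
  shows "iter_rel D Q a (f x) (f y)"
  using assms(1)
proof (induction rule: iter_rel.induct)
  case (zero x)
  then show ?case by (intro iter_rel.zero assms(2))
next
  case (nonzero x y a)
  then show ?case by (intro iter_rel.nonzero) (blast intro: assms(2,3))+
qed

lemma iter_rel_mono_carrier:
  assumes "iter_rel C P a x y" "C \<subseteq> D"
  shows "iter_rel D P a x y"
  using iter_rel_map[of C P a x y id D P] assms by auto

lemma ozero_le: "ozero \<le> (a::'o::wellorder)"
  unfolding ozero_def by (rule Least_le) simp

lemma not_oadd_ozero:
  assumes "omega_pow b d"
  shows "\<not> oadd g d (ozero::'o::wellorder)"
proof
  assume "oadd g d (ozero::'o)"
  then obtain h where "bij_betw h {x. g \<le> x \<and> x < (ozero::'o)} {x. x < d}"
    unfolding oadd_def ord_iso_def by blast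
  moreover have "{x. g \<le> x \<and> x < (ozero::'o)} = {}"
    using ozero_le by (auto simp: not_less[symmetric])
  ultimately have "{x. x < d} = {}" by (simp add: bij_betw_def)
  moreover obtain h' where "bij_betw h' {x. x < d} (FinFun b)"
    using assms unfolding omega_pow_def ord_iso_def by blast
  ultimately have "FinFun b = {}" by (simp add: bij_betw_def)
  moreover have "(\<lambda>_. 0) \<in> FinFun b" by (simp add: FinFun_def)
  ultimately show False by simp
qed

lemma ell_ozero: "ell (ozero::'o::wellorder) = ozero"
  unfolding ell_def by (rule the_equality) (auto dest: not_oadd_ozero)

lemma Hseq_eventually_ozero:
  assumes "x \<in> Hseq \<Lambda>"
  obtains j where "\<And>i. j \<le> i \<Longrightarrow> x i = ozero"
proof -
  from assms obtain j where j: "x j = ozero" and "x \<in> Iseq \<Lambda>" unfolding Hseq_def by auto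
  then have ell_step: "x (Suc i) \<le> ell (x i)" for i by (simp add: Iseq_def)
  have "x i = ozero" if "j \<le> i" for i
    using that
  proof (induction i rule: dec_induct)
    case base
    show ?case by (fact j)
  next
    case (step i)
    then show ?case using ell_step[of i] ell_ozero ozero_le[of "x (Suc i)"] by (metis antisym)
  qed
  then show thesis by (rule that)
qed

definition trunc_seq :: "nat \<Rightarrow> (nat \<Rightarrow> 'o::wellorder) \<Rightarrow> nat \<Rightarrow> 'o" where
  "trunc_seq k w = (\<lambda>i. if i < k then w i else ozero)"

lemma trunc_seq_in_Hseq:
  assumes "w \<in> Iseq \<Lambda>"
  shows "trunc_seq k w \<in> Hseq \<Lambda>"
proof -
  have "trunc_seq k w (Suc i) \<le> ell (trunc_seq k w i)" for i
    using assms by (auto simp: trunc_seq_def Iseq_def ozero_le)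
  moreover have "trunc_seq k w i < \<Lambda>" for i
    using assms ozero_le[of "w 0"] by (auto simp: trunc_seq_def Iseq_def intro: le_less_trans)
  moreover have "trunc_seq k w k = ozero" by (simp add: trunc_seq_def)
  ultimately show ?thesis unfolding Hseq_def Iseq_def by blast
qed

lemma Rrel_trunc_seq:
  assumes "Rrel n w v" "n < k"
  shows "Rrel n (trunc_seq k w) (trunc_seq k v)"
  using assms by (auto simp: Rrel_def trunc_seq_def)

lemma trunc_seq_eq:
  assumes "\<And>i. k \<le> i \<Longrightarrow> w i = ozero"
  shows "trunc_seq k w = w"
  using assms by (auto simp: trunc_seq_def fun_eq_iff)

theorem proposition4p7:
  fixes \<Lambda> :: "'o::wellorder"
    and x y :: "nat \<Rightarrow> 'o" and n :: nat and \<alpha> :: 'o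
  assumes eps: "omega_pow \<Lambda> \<Lambda>"
    and x: "x \<in> Hseq \<Lambda>" and y: "y \<in> Hseq \<Lambda>"
    and \<alpha>: "\<alpha> < \<Lambda>"
  shows "iter_rel (Hseq \<Lambda>) (Rrel n) \<alpha> x y \<longleftrightarrow> iter_rel (Iseq \<Lambda>) (Rrel n) \<alpha> x y"
proof
  assume "iter_rel (Hseq \<Lambda>) (Rrel n) \<alpha> x y"
  then show "iter_rel (Iseq \<Lambda>) (Rrel n) \<alpha> x y"
    by (rule iter_rel_mono_carrier) (auto simp: Hseq_def)
next
  assume I: "iter_rel (Iseq \<Lambda>) (Rrel n) \<alpha> x y"
  obtain jx where jx: "\<And>i. jx \<le> i \<Longrightarrow> x i = ozero" using Hseq_eventually_ozero[OF x] by blast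
  obtain jy where jy: "\<And>i. jy \<le> i \<Longrightarrow> y i = ozero" using Hseq_eventually_ozero[OF y] by blast
  define k where "k = jx + jy + Suc n"
  have "iter_rel (Hseq \<Lambda>) (Rrel n) \<alpha> (trunc_seq k x) (trunc_seq k y)"
    using I by (rule iter_rel_map) (auto intro: trunc_seq_in_Hseq Rrel_trunc_seq simp: k_def)
  moreover have "trunc_seq k x = x" "trunc_seq k y = y"
    using jx jy by (auto intro!: trunc_seq_eq simp: k_def)
  ultimately show "iter_rel (Hseq \<Lambda>) (Rrel n) \<alpha> x y" by simp
qed

end
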